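(* Let $T$ be an $n$-dimensional simplex in $\mathbb{R}^n$, and let $Q$ be a polytope in $\mathbb{R}^n$ having at most $n$ vertices. Suppose that, for every unit vector $u$, there exists $v \in u^\perp$ such that $Q_u + v \subseteq T_u$. Then there exists $v_0 \in \mathbb{R}^n$ such that $Q + v_0 \subseteq T$.
   Context: For a unit vector $u$ and a set $S\subseteq\mathbb{R}^n$, $S_u$ denotes the orthogonal projection of $S$ onto the hyperplane $u^\perp$. *)

theory Defs
  imports "HOL-Analysis.Analysis"
begin

definition proj_perp :: "'a::euclidean_space \<Rightarrow> 'a set \<Rightarrow> 'a set" where
  "proj_perp u S = (\<lambda>x. x - (x \<bullet> u) *\<^sub>R u) ` S"

end

theory Submission
  imports Defs
begin

text \<open>
  Let \<open>\<beta>\<^sub>c\<close>, for \<open>c\<close> a vertex of \<open>T\<close>, be the barycentric coordinates with respect to \<open>T\<close>,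
  and let \<open>E\<close> be the vertex set of \<open>Q\<close>. A translate of \<open>E\<close>, hence of \<open>Q\<close>, lies in \<open>T\<close> as
  soon as the minima \<open>m\<^sub>c = min\<^sub>e\<^sub>\<in>\<^sub>E \<beta>\<^sub>c(e)\<close> satisfy \<open>\<Sum>\<^sub>c m\<^sub>c \<ge> 0\<close>. To see this, pick
  minimisers \<open>e\<^sub>c\<close> and group the gradients of the affine functions \<open>\<beta>\<^sub>c\<close> according to \<open>e\<^sub>c\<close>:
  this gives at most \<open>n\<close> vectors with sum zero, so some unit vector \<open>u\<close> is orthogonal to all
  of them. The hypothesis for \<open>u\<close> moves each \<open>e \<in> E\<close>, by a common translation followed by a
  motion parallel to \<open>u\<close>, to a point \<open>t\<^sub>e \<in> T\<close>. Neither motion changes \<open>\<Sum>\<^sub>c \<beta>\<^sub>c(e\<^sub>c)\<close>,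
  which therefore equals \<open>\<Sum>\<^sub>c \<beta>\<^sub>c(t\<^sub>e\<^sub>c) \<ge> 0\<close>.
\<close>

lemma proj_perp_translate_subsetD:
  assumes "(\<lambda>x. x + v) ` proj_perp u Q \<subseteq> proj_perp u T" "q \<in> Q"
  shows "\<exists>t\<in>T. \<exists>r. q + v = t + r *\<^sub>R u"
proof -
  have "q - (q \<bullet> u) *\<^sub>R u + v \<in> proj_perp u T"
    using assms unfolding proj_perp_def by auto
  then obtain t where "t \<in> T" "q - (q \<bullet> u) *\<^sub>R u + v = t - (t \<bullet> u) *\<^sub>R u"
    unfolding proj_perp_def by auto
  then have "q + v = t + (q \<bullet> u - t \<bullet> u) *\<^sub>R u"
    by (simp add: algebra_simps)
  with \<open>t \<in> T\<close> show ?thesis by blast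
qed

lemma exists_unit_orthogonal_if_sum_zero:
  fixes A :: "'b \<Rightarrow> 'a::euclidean_space"
  assumes "finite E" "card E \<le> DIM('a)" "(\<Sum>e\<in>E. A e) = 0"
  obtains u where "norm u = 1" "\<And>e. e \<in> E \<Longrightarrow> A e \<bullet> u = 0"
proof (cases "E = {}")
  case True
  obtain b :: 'a where "b \<in> Basis" by (meson nonempty_Basis all_not_in_conv)
  then show thesis using True by (intro that[of b]) auto
next
  case False
  then obtain e0 where e0: "e0 \<in> E" by blast
  define S where "S = A ` (E - {e0})"
  have "finite S" unfolding S_def using assms(1) by simp
  have "card S < DIM('a)"
    unfolding S_def using assms(1,2) e0 card_image_le[of "E - {e0}" A]
    by (metis card_Diff1_less finite_Diff le_less_trans order.strict_trans2)
  then have "dim S < DIM('a)"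
    using dim_le_card[of S S] \<open>finite S\<close> span_superset by (metis le_less_trans)
  then obtain w :: 'a where "w \<noteq> 0" and w: "span S \<subseteq> {x. w \<bullet> x = 0}"
    using lowdim_subset_hyperplane by blast
  have others: "A e \<bullet> w = 0" if "e \<in> E - {e0}" for e
    using w span_superset[of S] that unfolding S_def by (force simp: inner_commute)
  have "A e0 \<bullet> w + (\<Sum>e\<in>E - {e0}. A e \<bullet> w) = 0"
    using assms(3) sum.remove[OF assms(1) e0, of "\<lambda>e. A e \<bullet> w"]
    by (metis inner_sum_left inner_zero_left)
  then have "A e0 \<bullet> w = 0" using others by simp
  with others show thesis
    using \<open>w \<noteq> 0\<close> by (intro that[of "w /\<^sub>R norm w"]) auto
qed

definition barycentric :: "'a::real_vector set \<Rightarrow> 'a \<Rightarrow> 'a \<Rightarrow> real" where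
  "barycentric C x = (SOME w. sum w C = 1 \<and> (\<Sum>c\<in>C. w c *\<^sub>R c) = x)"

locale affine_basis =
  fixes C :: "'a::euclidean_space set"
  assumes independent: "\<not> affine_dependent C"
    and spanning: "affine hull C = UNIV"
begin

lemma finite_basis: "finite C"
  using independent aff_independent_finite by blast

lemma basis_nonempty: "C \<noteq> {}"
  using spanning by auto

lemma barycentric: "sum (barycentric C x) C = 1" "(\<Sum>c\<in>C. barycentric C x c *\<^sub>R c) = x"
proof -
  have "\<exists>w. sum w C = 1 \<and> (\<Sum>c\<in>C. w c *\<^sub>R c) = x"
    using spanning affine_hull_finite[OF finite_basis] by blast
  from someI_ex[OF this] show "sum (barycentric C x) C = 1" "(\<Sum>c\<in>C. barycentric C x c *\<^sub>R c) = x"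
    unfolding barycentric_def by auto
qed

lemma barycentric_unique:
  assumes "sum w C = 1" "(\<Sum>c\<in>C. w c *\<^sub>R c) = x" "c \<in> C"
  shows "barycentric C x c = w c"
proof (rule ccontr)
  assume "barycentric C x c \<noteq> w c"
  moreover have "sum (\<lambda>d. barycentric C x d - w d) C = 0"
    using assms barycentric by (simp add: sum_subtractf)
  moreover have "(\<Sum>d\<in>C. (barycentric C x d - w d) *\<^sub>R d) = 0"
    using assms barycentric by (simp add: scaleR_diff_left sum_subtractf)
  ultimately have "affine_dependent C"
    using \<open>c \<in> C\<close> affine_dependent_explicit_finite[OF finite_basis] by force
  with independent show False ..
qed

lemma barycentric_translate:
  assumes "sum g C = 0" "c \<in> C"
  shows "barycentric C (x + (\<Sum>d\<in>C. g d *\<^sub>R d)) c = barycentric C x c + g c"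
  using assms barycentric[of x]
  by (intro barycentric_unique) (auto simp: sum.distrib scaleR_add_left)

lemma convex_hull_iff_barycentric_nonneg:
  "x \<in> convex hull C \<longleftrightarrow> (\<forall>c\<in>C. 0 \<le> barycentric C x c)"
proof
  assume "x \<in> convex hull C"
  then obtain w where "\<forall>c\<in>C. 0 \<le> w c" "sum w C = 1" "(\<Sum>c\<in>C. w c *\<^sub>R c) = x"
    unfolding convex_hull_finite[OF finite_basis] by blast
  then show "\<forall>c\<in>C. 0 \<le> barycentric C x c"
    using barycentric_unique by simp
next
  assume "\<forall>c\<in>C. 0 \<le> barycentric C x c"
  then show "x \<in> convex hull C"
    using barycentric[of x] unfolding convex_hull_finite[OF finite_basis] by blast
qed

lemma linear_barycentric:
  assumes "c \<in> C"
  shows "linear (\<lambda>x. barycentric C x c - barycentric C 0 c)"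
proof (rule linearI)
  fix x y
  have "barycentric C (x + y) c = barycentric C x c + barycentric C y c - barycentric C 0 c"
    using barycentric[of x] barycentric[of y] barycentric[of 0] assms
    by (intro barycentric_unique)
      (simp_all add: scaleR_add_left scaleR_diff_left sum.distrib sum_subtractf)
  then show "barycentric C (x + y) c - barycentric C 0 c
      = (barycentric C x c - barycentric C 0 c) + (barycentric C y c - barycentric C 0 c)"
    by simp
next
  fix r :: real and x
  have "barycentric C (r *\<^sub>R x) c = r * barycentric C x c + (1 - r) * barycentric C 0 c"
    using barycentric[of x] barycentric[of 0] assms
    by (intro barycentric_unique)
      (simp_all add: sum.distrib scaleR_add_left scaleR_sum_right[symmetric]
        sum_distrib_left[symmetric] flip: scaleR_scaleR)
  then show "barycentric C (r *\<^sub>R x) c - barycentric C 0 c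
      = r *\<^sub>R (barycentric C x c - barycentric C 0 c)"
    by (simp add: algebra_simps)
qed

lemma barycentric_gradient:
  "\<exists>a b. \<forall>c\<in>C. \<forall>x. barycentric C x c = a c \<bullet> x + b c"
proof -
  have grad: "barycentric C x c = adjoint (\<lambda>x. barycentric C x c - barycentric C 0 c) 1 \<bullet> x
      + barycentric C 0 c" if "c \<in> C" for c x
    using adjoint_works[OF linear_barycentric[OF that], of x 1] by (simp add: inner_commute)
  show ?thesis
    by (intro exI ballI allI) (rule grad)
qed

lemma barycentric_affine:
  obtains a b where "\<forall>c\<in>C. \<forall>x. barycentric C x c = a c \<bullet> x + b c" "(\<Sum>c\<in>C. a c) = 0"
proof -
  obtain a b where a: "\<And>c x. c \<in> C \<Longrightarrow> barycentric C x c = a c \<bullet> x + b c"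
    using barycentric_gradient by blast
  have sum_ab: "(\<Sum>c\<in>C. a c \<bullet> x + b c) = 1" for x
  proof -
    have "(\<Sum>c\<in>C. a c \<bullet> x + b c) = (\<Sum>c\<in>C. barycentric C x c)"
      by (intro sum.cong) (simp_all add: a)
    then show ?thesis
      using barycentric(1)[of x] by simp
  qed
  have "(\<Sum>c\<in>C. a c) \<bullet> x = 0" for x
    using sum_ab[of x] sum_ab[of 0] by (simp add: sum.distrib inner_sum_left)
  then have "(\<Sum>c\<in>C. a c) = 0"
    by (metis inner_eq_zero_iff)
  with a show thesis
    by (intro that[of a b]) simp_all
qed

lemma sum_barycentric_choice_nonneg:
  assumes "finite E" "card E \<le> DIM('a)" "ec ` C \<subseteq> E"
    and proj: "\<forall>u. norm u = 1 \<longrightarrow>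
      (\<exists>v. (\<lambda>x. x + v) ` proj_perp u E \<subseteq> proj_perp u (convex hull C))"
  shows "0 \<le> (\<Sum>c\<in>C. barycentric C (ec c) c)"
proof -
  obtain a b where a: "\<forall>c\<in>C. \<forall>x. barycentric C x c = a c \<bullet> x + b c"
    and sum_a: "(\<Sum>c\<in>C. a c) = 0"
    by (rule barycentric_affine)
  define A where "A e = (\<Sum>c\<in>{c\<in>C. ec c = e}. a c)" for e
  have regroup: "(\<Sum>c\<in>C. a c \<bullet> \<phi> (ec c)) = (\<Sum>e\<in>E. A e \<bullet> \<phi> e)" for \<phi>
    using sum.group[OF finite_basis \<open>finite E\<close> assms(3), of "\<lambda>c. a c \<bullet> \<phi> (ec c)"]
    unfolding A_def inner_sum_left by simp
  have "(\<Sum>e\<in>E. A e) = 0"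
    using sum.group[OF finite_basis \<open>finite E\<close> assms(3), of a] sum_a unfolding A_def by simp
  then obtain u where "norm u = 1" and Au: "\<And>e. e \<in> E \<Longrightarrow> A e \<bullet> u = 0"
    using exists_unit_orthogonal_if_sum_zero[OF \<open>finite E\<close> \<open>card E \<le> DIM('a)\<close>] by blast
  from proj[rule_format, OF \<open>norm u = 1\<close>] obtain v
    where v: "(\<lambda>x. x + v) ` proj_perp u E \<subseteq> proj_perp u (convex hull C)" ..
  have "\<forall>e\<in>E. \<exists>t\<in>convex hull C. \<exists>r. e + v = t + r *\<^sub>R u"
    by (intro ballI proj_perp_translate_subsetD[OF v])
  then obtain t r where t: "\<And>e. e \<in> E \<Longrightarrow> t e \<in> convex hull C"
    and tr: "\<And>e. e \<in> E \<Longrightarrow> e + v = t e + r e *\<^sub>R u"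
    by metis
  have shift: "A e \<bullet> (e - t e) = - (A e \<bullet> v)" if "e \<in> E" for e
  proof -
    have "e - t e = (e + v - t e) - v"
      by (simp add: algebra_simps)
    moreover have "e + v - t e = r e *\<^sub>R u"
      using tr[OF that] by (metis add_diff_cancel_left')
    ultimately show ?thesis
      using Au[OF that] by (simp add: inner_diff_right)
  qed
  have "(\<Sum>e\<in>E. A e \<bullet> (e - t e)) = (\<Sum>e\<in>E. - (A e \<bullet> v))"
    by (rule sum.cong) (simp_all add: shift)
  also have "\<dots> = - ((\<Sum>e\<in>E. A e) \<bullet> v)"
    by (simp add: inner_sum_left sum_negf)
  finally have "(\<Sum>c\<in>C. a c \<bullet> (ec c - t (ec c))) = 0"
    using regroup[of "\<lambda>e. e - t e"] \<open>(\<Sum>e\<in>E. A e) = 0\<close> by simp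
  moreover have "(\<Sum>c\<in>C. barycentric C (ec c) c) - (\<Sum>c\<in>C. barycentric C (t (ec c)) c)
      = (\<Sum>c\<in>C. a c \<bullet> (ec c - t (ec c)))"
    unfolding sum_subtractf[symmetric] by (intro sum.cong) (simp_all add: a[rule_format] inner_diff_right)
  ultimately have "(\<Sum>c\<in>C. barycentric C (ec c) c) = (\<Sum>c\<in>C. barycentric C (t (ec c)) c)"
    by simp
  also have "\<dots> \<ge> 0"
    using t assms(3) convex_hull_iff_barycentric_nonneg by (intro sum_nonneg) blast
  finally show ?thesis .
qed

lemma translate_into_convex_hull_if_sum_Min_nonneg:
  assumes "finite E" "E \<noteq> {}" "0 \<le> (\<Sum>c\<in>C. Min ((\<lambda>e. barycentric C e c) ` E))"
  shows "\<exists>v. (\<lambda>x. x + v) ` E \<subseteq> convex hull C"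
proof -
  define m where "m c = Min ((\<lambda>e. barycentric C e c) ` E)" for c
  define g where "g c = (\<Sum>d\<in>C. m d) / card C - m c" for c
  have "sum g C = 0"
    using finite_basis basis_nonempty by (simp add: g_def sum_subtractf)
  have "x + (\<Sum>d\<in>C. g d *\<^sub>R d) \<in> convex hull C" if "x \<in> E" for x
    unfolding convex_hull_iff_barycentric_nonneg
  proof
    fix c assume "c \<in> C"
    have "m c \<le> barycentric C x c"
      unfolding m_def using assms(1) that by simp
    moreover have "0 \<le> (\<Sum>d\<in>C. m d) / card C"
      using assms(3) unfolding m_def by simp
    moreover have "barycentric C (x + (\<Sum>d\<in>C. g d *\<^sub>R d)) c = barycentric C x c + g c"
      using \<open>sum g C = 0\<close> \<open>c \<in> C\<close> by (rule barycentric_translate)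
    ultimately show "0 \<le> barycentric C (x + (\<Sum>d\<in>C. g d *\<^sub>R d)) c"
      unfolding g_def by linarith
  qed
  then have "(\<lambda>x. x + (\<Sum>d\<in>C. g d *\<^sub>R d)) ` E \<subseteq> convex hull C"
    by (rule image_subsetI)
  then show ?thesis ..
qed

lemma exists_translate_into_convex_hull:
  assumes "finite E" "card E \<le> DIM('a)"
    and proj: "\<forall>u. norm u = 1 \<longrightarrow>
      (\<exists>v. (\<lambda>x. x + v) ` proj_perp u E \<subseteq> proj_perp u (convex hull C))"
  shows "\<exists>v. (\<lambda>x. x + v) ` E \<subseteq> convex hull C"
proof (cases "E = {}")
  case True
  then show ?thesis by simp
next
  case False
  have "\<forall>c. \<exists>e\<in>E. Min ((\<lambda>e. barycentric C e c) ` E) = barycentric C e c"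
    using assms(1) False by (simp flip: image_iff)
  then obtain ec where "\<And>c. ec c \<in> E"
    and "\<And>c. Min ((\<lambda>e. barycentric C e c) ` E) = barycentric C (ec c) c"
    unfolding Bex_def choice_iff by blast
  then have "0 \<le> (\<Sum>c\<in>C. Min ((\<lambda>e. barycentric C e c) ` E))"
    using sum_barycentric_choice_nonneg[OF assms(1,2) _ proj] by auto
  then show ?thesis
    by (rule translate_into_convex_hull_if_sum_Min_nonneg[OF assms(1) False])
qed

end

lemma full_dim_simplex_affine_basis:
  fixes T :: "'a::euclidean_space set"
  assumes "int DIM('a) simplex T"
  obtains C where "affine_basis C" "T = convex hull C"
proof -
  obtain C where indep: "\<not> affine_dependent C" and "int (card C) = int DIM('a) + 1"
    and "T = convex hull C"
    using assms unfolding simplex_def by blast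
  moreover from this have "aff_dim C = DIM('a)"
    by (simp add: aff_dim_affine_independent)
  then have "affine hull C = UNIV"
    by (simp add: aff_dim_eq_full)
  ultimately show thesis
    by (intro that[of C]) (simp_all add: affine_basis_def)
qed

lemma translate_convex_hull_subset:
  fixes E :: "'a::real_vector set"
  assumes "(\<lambda>x. x + v) ` E \<subseteq> S" "convex S"
  shows "(\<lambda>x. x + v) ` (convex hull E) \<subseteq> S"
proof -
  have "(\<lambda>x. x + v) ` (convex hull E) = convex hull ((\<lambda>x. x + v) ` E)"
    using convex_hull_translation[of v E] by (simp add: add.commute)
  also have "\<dots> \<subseteq> S"
    using assms by (rule hull_minimal)
  finally show ?thesis .
qed

theorem lemma2p4:
  fixes T Q :: "'a::euclidean_space set"
  assumes "int DIM('a) simplex T"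
    and "polytope Q"
    and "card {x. x extreme_point_of Q} \<le> DIM('a)"
    and "\<forall>u. norm u = 1 \<longrightarrow>
           (\<exists>v. v \<bullet> u = 0 \<and> (\<lambda>x. x + v) ` proj_perp u Q \<subseteq> proj_perp u T)"
  shows "\<exists>v0. (\<lambda>x. x + v0) ` Q \<subseteq> T"
proof -
  obtain C where "affine_basis C" and T: "T = convex hull C"
    using assms(1) by (rule full_dim_simplex_affine_basis)
  define E where "E = {x. x extreme_point_of Q}"
  have "finite E"
    using assms(2) finite_polyhedron_extreme_points polytope_imp_polyhedron unfolding E_def by blast
  have Q: "Q = convex hull E"
    unfolding E_def using assms(2)
    by (intro Krein_Milman_Minkowski polytope_imp_compact polytope_imp_convex)
  have "\<forall>u. norm u = 1 \<longrightarrow> (\<exists>v. (\<lambda>x. x + v) ` proj_perp u E \<subseteq> proj_perp u (convex hull C))"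
  proof (intro allI impI)
    fix u :: 'a assume "norm u = 1"
    with assms(4) obtain v where "(\<lambda>x. x + v) ` proj_perp u Q \<subseteq> proj_perp u T"
      by blast
    moreover have "proj_perp u E \<subseteq> proj_perp u Q"
      unfolding proj_perp_def Q by (intro image_mono hull_subset)
    ultimately show "\<exists>v. (\<lambda>x. x + v) ` proj_perp u E \<subseteq> proj_perp u (convex hull C)"
      unfolding T by blast
  qed
  then obtain v where "(\<lambda>x. x + v) ` E \<subseteq> T"
    using affine_basis.exists_translate_into_convex_hull[OF \<open>affine_basis C\<close> \<open>finite E\<close>] assms(3)
    unfolding E_def T by blast
  then have "(\<lambda>x. x + v) ` Q \<subseteq> T"
    unfolding Q T by (intro translate_convex_hull_subset convex_convex_hull)
  then show ?thesis ..
qed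

end
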